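(* Let $(\eta,F)$ be any generalised entropy. Then: (a) for any jointly distributed random variables $X$ (with values in a finite set) and $Y$ (discrete), $H(X)-H(X\mid Y)\geq 0$; (b) (data processing inequality) for any discrete random variables $X,Y,Z$ such that $Z$ is conditionally independent of $X$ given $Y$, we have $H(X\mid Z)\geq H(X\mid Y)$.
   Context: Generalised entropy: a pair $(\eta,F)$ where $F$ is a bounded real-valued function defined on probability vectors of every finite length, which is symmetric (unchanged by permuting entries) and expansible (unchanged by appending zero entries), and $\eta$ is a real function of a real variable, such that either (a) $\eta$ is increasing and $F$ is concave, or (b) $\eta$ is decreasing and $F$ is convex. The entropies are $H(X)=\eta(F(p_X))$ and $H(X\mid Y)=\eta\big(\sum_{y:\,p(y)>0}p(y)F(p_{X\mid y})\big)$, where $p_{X\mid y}=(p(x\mid y))_x$ is the posterior distribution of $X$ given $Y=y$ (and similarly for $Z$). *)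

theory Defs
  imports "HOL-Probability.Probability_Mass_Function" "HOL-Analysis.Infinite_Sum"
begin

definition prob_vec :: "real list \<Rightarrow> bool" where
  "prob_vec p \<longleftrightarrow> (\<forall>a\<in>set p. 0 \<le> a) \<and> sum_list p = 1"

definition mix_vec :: "real \<Rightarrow> real list \<Rightarrow> real list \<Rightarrow> real list" where
  "mix_vec t p q = map2 (\<lambda>a b. t * a + (1 - t) * b) p q"

definition concave_F :: "(real list \<Rightarrow> real) \<Rightarrow> bool" where
  "concave_F F \<longleftrightarrow> (\<forall>p q t. prob_vec p \<longrightarrow> prob_vec q \<longrightarrow> length p = length q
      \<longrightarrow> 0 \<le> t \<longrightarrow> t \<le> 1 \<longrightarrow> F (mix_vec t p q) \<ge> t * F p + (1 - t) * F q)"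

definition convex_F :: "(real list \<Rightarrow> real) \<Rightarrow> bool" where
  "convex_F F \<longleftrightarrow> (\<forall>p q t. prob_vec p \<longrightarrow> prob_vec q \<longrightarrow> length p = length q
      \<longrightarrow> 0 \<le> t \<longrightarrow> t \<le> 1 \<longrightarrow> F (mix_vec t p q) \<le> t * F p + (1 - t) * F q)"

definition gen_entropy :: "(real \<Rightarrow> real) \<Rightarrow> (real list \<Rightarrow> real) \<Rightarrow> bool" where
  "gen_entropy \<eta> F \<longleftrightarrow>
     (\<exists>B. \<forall>p. prob_vec p \<longrightarrow> \<bar>F p\<bar> \<le> B) \<and>
     (\<forall>p q. prob_vec p \<longrightarrow> mset p = mset q \<longrightarrow> F q = F p) \<and>
     (\<forall>p. prob_vec p \<longrightarrow> F (p @ [0]) = F p) \<and>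
     ((mono \<eta> \<and> concave_F F) \<or> (antimono \<eta> \<and> convex_F F))"

text \<open>A fixed enumeration (without repetition) of a finite set; by symmetry of F
  the choice does not matter.\<close>
definition enum_of :: "'a set \<Rightarrow> 'a list" where
  "enum_of A = (SOME xs. distinct xs \<and> set xs = A)"

definition Pr :: "'w pmf \<Rightarrow> 'w set \<Rightarrow> real" where
  "Pr \<mu> A = measure_pmf.prob \<mu> A"

definition distr_vec :: "'w pmf \<Rightarrow> ('w \<Rightarrow> 'x) \<Rightarrow> real list" where
  "distr_vec \<mu> X = map (\<lambda>x. Pr \<mu> (X -` {x})) (enum_of (range X))"

definition post_vec :: "'w pmf \<Rightarrow> ('w \<Rightarrow> 'x) \<Rightarrow> ('w \<Rightarrow> 'y) \<Rightarrow> 'y \<Rightarrow> real list" where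
  "post_vec \<mu> X Y y =
     map (\<lambda>x. Pr \<mu> (X -` {x} \<inter> Y -` {y}) / Pr \<mu> (Y -` {y})) (enum_of (range X))"

definition gH :: "(real \<Rightarrow> real) \<Rightarrow> (real list \<Rightarrow> real) \<Rightarrow> 'w pmf \<Rightarrow> ('w \<Rightarrow> 'x) \<Rightarrow> real" where
  "gH \<eta> F \<mu> X = \<eta> (F (distr_vec \<mu> X))"

definition gHc :: "(real \<Rightarrow> real) \<Rightarrow> (real list \<Rightarrow> real) \<Rightarrow> 'w pmf \<Rightarrow> ('w \<Rightarrow> 'x) \<Rightarrow> ('w \<Rightarrow> 'y) \<Rightarrow> real" where
  "gHc \<eta> F \<mu> X Y =
     \<eta> (\<Sum>\<^sub>\<infinity>y\<in>{y. Pr \<mu> (Y -` {y}) > 0}. Pr \<mu> (Y -` {y}) * F (post_vec \<mu> X Y y))"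

definition cond_indep :: "'w pmf \<Rightarrow> ('w \<Rightarrow> 'x) \<Rightarrow> ('w \<Rightarrow> 'y) \<Rightarrow> ('w \<Rightarrow> 'z) \<Rightarrow> bool" where
  "cond_indep \<mu> X Y Z \<longleftrightarrow> (\<forall>x y z.
     Pr \<mu> (X -` {x} \<inter> Y -` {y} \<inter> Z -` {z}) * Pr \<mu> (Y -` {y}) =
     Pr \<mu> (X -` {x} \<inter> Y -` {y}) * Pr \<mu> (Y -` {y} \<inter> Z -` {z}))"

end

theory Submission
  imports Defs
begin

(* Both inequalities are Jensen's inequality for the concave functional F on probability
   vectors over the finite range of X, transported through the increasing function \<eta>; case (b)
   of a generalised entropy turns into case (a) on passing to (t \<mapsto> \<eta> (-t), -F).
   For (a), the law of X is the mixture of the posteriors p_{X|y} with weights p(y).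
   For (b), conditional independence makes p_{X|z} the mixture of the p_{X|y} with weights
   p(y|z), so Jensen for each z, averaged over z, gives
     sum_z p(z) F(p_{X|z}) \<ge> sum_z p(z) sum_y p(y|z) F(p_{X|y}) = sum_y p(y) F(p_{X|y}).
   The mixtures are countable; they are truncated to finitely many components, the residual
   mass costing at most B times a vanishing weight because F is bounded by B. *)

lemma enum_of_finite:
  assumes "finite A"
  shows "distinct (enum_of A)" and "set (enum_of A) = A"
proof -
  have "distinct (enum_of A) \<and> set (enum_of A) = A"
    unfolding enum_of_def by (rule someI_ex) (use finite_distinct_list[OF assms] in blast)
  then show "distinct (enum_of A)" and "set (enum_of A) = A" by auto
qed

lemma Pr_nonneg: "0 \<le> Pr \<mu> A"
  unfolding Pr_def by simp

lemma Pr_UNIV [simp]: "Pr \<mu> UNIV = 1"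
  unfolding Pr_def by simp

lemma Pr_mono: "A \<subseteq> B \<Longrightarrow> Pr \<mu> A \<le> Pr \<mu> B"
  unfolding Pr_def by (simp add: measure_pmf.finite_measure_mono)

lemma has_sum_pmf_Pr: "(pmf \<mu> has_sum Pr \<mu> A) A"
proof -
  have abs: "Infinite_Set_Sum.abs_summable_on (pmf \<mu>) A" by (rule pmf_abs_summable)
  then have "pmf \<mu> summable_on A"
    using abs_summable_equivalent abs_summable_summable by blast
  moreover have "infsum (pmf \<mu>) A = Pr \<mu> A"
    by (simp add: Pr_def measure_pmf_conv_infsetsum infsetsum_infsum[OF abs])
  ultimately show ?thesis by (metis has_sum_infsum)
qed

lemma has_sum_Pr_preimages: "((\<lambda>y. Pr \<mu> (A \<inter> Y -` {y})) has_sum Pr \<mu> A) UNIV"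
proof -
  have "bij_betw (\<lambda>\<omega>. (Y \<omega>, \<omega>)) A (SIGMA y:UNIV. A \<inter> Y -` {y})"
    by (rule bij_betwI[of _ _ _ snd]) auto
  then have "((\<lambda>p. pmf \<mu> (snd p)) has_sum Pr \<mu> A) (SIGMA y:UNIV. A \<inter> Y -` {y})"
    using has_sum_reindex_bij_betw has_sum_pmf_Pr[of \<mu> A] by fastforce
  then show ?thesis
    by (rule has_sum_SigmaD) (simp add: has_sum_pmf_Pr)
qed

lemma has_sum_Pr_preimages_pos:
  "((\<lambda>y. Pr \<mu> (A \<inter> Y -` {y})) has_sum Pr \<mu> A) {y. 0 < Pr \<mu> (Y -` {y})}"
proof -
  have "Pr \<mu> (A \<inter> Y -` {y}) = 0" if "\<not> 0 < Pr \<mu> (Y -` {y})" for y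
    using that Pr_mono[of "A \<inter> Y -` {y}" "Y -` {y}" \<mu>] Pr_nonneg[of \<mu>]
    by (meson inf_le2 order.antisym order.trans not_le)
  then show ?thesis
    using has_sum_Pr_preimages by (subst has_sum_cong_neutral[where T = UNIV]) auto
qed

lemma sum_Pr_preimages:
  assumes "finite (range X)"
  shows "(\<Sum>x\<in>range X. Pr \<mu> (A \<inter> X -` {x})) = Pr \<mu> A"
proof -
  have "A \<inter> X -` {x} = {}" if "x \<notin> range X" for x
    using that by blast
  then have "((\<lambda>x. Pr \<mu> (A \<inter> X -` {x})) has_sum Pr \<mu> A) (range X)"
    using has_sum_Pr_preimages
    by (subst has_sum_cong_neutral[where T = UNIV]) (auto simp: Pr_def)
  then show ?thesis
    using has_sum_finite[OF assms] has_sum_unique by blast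
qed

lemma summable_on_joint_Pr: "(\<lambda>(y, z). Pr \<mu> (Y -` {y} \<inter> Z -` {z})) summable_on A"
proof -
  have "(\<lambda>(y, z). Pr \<mu> (Y -` {y} \<inter> Z -` {z})) = (\<lambda>p. Pr \<mu> (UNIV \<inter> (\<lambda>\<omega>. (Y \<omega>, Z \<omega>)) -` {p}))"
    by (auto simp: vimage_def Int_def)
  then have "(\<lambda>(y, z). Pr \<mu> (Y -` {y} \<inter> Z -` {z})) summable_on UNIV"
    using has_sum_Pr_preimages summable_on_def by metis
  then show ?thesis
    by (rule summable_on_subset_banach) simp
qed

lemma summable_on_bounded_mult:
  fixes w g :: "'i \<Rightarrow> real"
  assumes "w summable_on I" "\<And>i. i \<in> I \<Longrightarrow> 0 \<le> w i" "\<And>i. i \<in> I \<Longrightarrow> \<bar>g i\<bar> \<le> B"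
  shows "(\<lambda>i. w i * g i) summable_on I"
proof -
  have "(\<lambda>i. norm (w i * g i)) summable_on I"
  proof (rule summable_on_comparison_test)
    show "(\<lambda>i. B * w i) summable_on I"
      using assms(1) by (rule summable_on_cmult_right)
    show "norm (w i * g i) \<le> B * w i" if "i \<in> I" for i
      using assms(2,3)[OF that] mult_left_mono[of "\<bar>g i\<bar>" B "w i"]
      by (simp add: abs_mult mult.commute)
  qed simp
  then show ?thesis
    by (rule abs_summable_summable)
qed

definition prob_on :: "'x set \<Rightarrow> ('x \<Rightarrow> real) \<Rightarrow> bool" where
  "prob_on A f \<longleftrightarrow> (\<forall>x\<in>A. 0 \<le> f x) \<and> sum f A = 1"

lemma prob_vec_map_enum_of:
  assumes "finite A"
  shows "prob_vec (map f (enum_of A)) \<longleftrightarrow> prob_on A f"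
  using enum_of_finite[OF assms]
  by (simp add: prob_vec_def prob_on_def sum_list_distinct_conv_sum_set)

lemma prob_on_mix:
  assumes "prob_on A f" "prob_on A g" "0 \<le> t" "t \<le> 1"
  shows "prob_on A (\<lambda>x. t * f x + (1 - t) * g x)"
  using assms by (simp add: prob_on_def sum.distrib sum_distrib_left[symmetric])

lemma mixture_residual:
  assumes A: "finite A" and p: "prob_on A p"
    and w: "\<And>i. i \<in> I \<Longrightarrow> 0 \<le> w i" "(w has_sum 1) I"
    and q: "\<And>i. i \<in> I \<Longrightarrow> prob_on A (q i)"
    and mixture: "\<And>x. x \<in> A \<Longrightarrow> ((\<lambda>i. w i * q i x) has_sum p x) I"
    and S: "finite S" "S \<subseteq> I"
  shows "sum w S \<le> 1"
    and "\<And>x. x \<in> A \<Longrightarrow> 0 \<le> p x - (\<Sum>i\<in>S. w i * q i x)"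
    and "(\<Sum>x\<in>A. p x - (\<Sum>i\<in>S. w i * q i x)) = 1 - sum w S"
proof -
  have "(w has_sum (1 - sum w S)) (I - S)"
    using has_sum_Diff[OF w(2) has_sum_finite[OF S(1)] S(2)] .
  then show "sum w S \<le> 1"
    using has_sum_nonneg w(1) by (metis DiffD1 diff_ge_0_iff_ge)
  show "0 \<le> p x - (\<Sum>i\<in>S. w i * q i x)" if "x \<in> A" for x
  proof -
    have "((\<lambda>i. w i * q i x) has_sum p x - (\<Sum>i\<in>S. w i * q i x)) (I - S)"
      using has_sum_Diff[OF mixture[OF that] has_sum_finite[OF S(1)] S(2)] .
    moreover have "0 \<le> w i * q i x" if "i \<in> I - S" for i
      using w(1) q that \<open>x \<in> A\<close> by (simp add: prob_on_def)
    ultimately show ?thesis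
      by (rule has_sum_nonneg)
  qed
  have "(\<Sum>x\<in>A. \<Sum>i\<in>S. w i * q i x) = (\<Sum>i\<in>S. w i * (\<Sum>x\<in>A. q i x))"
    by (subst sum.swap) (simp add: sum_distrib_left)
  also have "\<dots> = sum w S"
    using q S(2) by (auto simp: prob_on_def intro!: sum.cong)
  finally show "(\<Sum>x\<in>A. p x - (\<Sum>i\<in>S. w i * q i x)) = 1 - sum w S"
    using p by (simp add: prob_on_def sum_subtractf)
qed

lemma mixture_truncation:
  assumes A: "finite A" and p: "prob_on A p"
    and w: "\<And>i. i \<in> I \<Longrightarrow> 0 \<le> w i" "(w has_sum 1) I"
    and q: "\<And>i. i \<in> I \<Longrightarrow> prob_on A (q i)"
    and mixture: "\<And>x. x \<in> A \<Longrightarrow> ((\<lambda>i. w i * q i x) has_sum p x) I"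
    and S: "finite S" "S \<subseteq> I"
  obtains r where "prob_on A r" "sum w S \<le> 1"
    and "\<And>x. x \<in> A \<Longrightarrow> p x = (1 - sum w S) * r x + (\<Sum>i\<in>S. w i * q i x)"
proof -
  define s where "s = sum w S"
  define d where "d x = p x - (\<Sum>i\<in>S. w i * q i x)" for x
  have "s \<le> 1" and d_nonneg: "\<And>x. x \<in> A \<Longrightarrow> 0 \<le> d x" and d_sum: "sum d A = 1 - s"
    using mixture_residual[OF assms] unfolding s_def d_def by blast+
  show ?thesis
  proof (cases "s < 1")
    case True
    show ?thesis
    proof (rule that[of "\<lambda>x. d x / (1 - s)"])
      show "prob_on A (\<lambda>x. d x / (1 - s))"
        using True d_nonneg d_sum by (auto simp: prob_on_def sum_divide_distrib[symmetric])
    qed (use True in \<open>simp_all add: s_def d_def\<close>)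
  next
    case False
    then have "d x = 0" if "x \<in> A" for x
      using \<open>s \<le> 1\<close> d_sum sum_nonneg_eq_0_iff[OF A] d_nonneg that by auto
    then show ?thesis
      using that[of p] p False \<open>s \<le> 1\<close> by (simp add: s_def d_def)
  qed
qed

locale bounded_concave =
  fixes F :: "real list \<Rightarrow> real" and B :: real
  assumes concave: "concave_F F"
    and bounded: "\<And>p. prob_vec p \<Longrightarrow> \<bar>F p\<bar> \<le> B"
begin

definition F_on :: "'x set \<Rightarrow> ('x \<Rightarrow> real) \<Rightarrow> real" where
  "F_on A f = F (map f (enum_of A))"

lemma F_on_cong: "finite A \<Longrightarrow> (\<And>x. x \<in> A \<Longrightarrow> f x = g x) \<Longrightarrow> F_on A f = F_on A g"
  unfolding F_on_def using enum_of_finite(2) by (metis map_eq_conv)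

lemma F_on_bounded: "finite A \<Longrightarrow> prob_on A f \<Longrightarrow> \<bar>F_on A f\<bar> \<le> B"
  unfolding F_on_def using bounded prob_vec_map_enum_of by blast

lemma F_on_concave:
  assumes "finite A" "prob_on A f" "prob_on A g" "0 \<le> t" "t \<le> 1"
  shows "t * F_on A f + (1 - t) * F_on A g \<le> F_on A (\<lambda>x. t * f x + (1 - t) * g x)"
proof -
  have mix: "mix_vec t (map f xs) (map g xs) = map (\<lambda>x. t * f x + (1 - t) * g x) xs" for xs
    unfolding mix_vec_def by (induction xs) auto
  have "t * F (map f (enum_of A)) + (1 - t) * F (map g (enum_of A))
      \<le> F (mix_vec t (map f (enum_of A)) (map g (enum_of A)))"
    using concave assms prob_vec_map_enum_of[OF assms(1)] unfolding concave_F_def by simp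
  then show ?thesis
    unfolding F_on_def mix .
qed

text \<open>The distinguished component \<open>r\<close> lets the induction absorb one component at a time,
  and later carries the residual mass of a truncated countable mixture.\<close>
lemma F_on_jensen:
  assumes "finite A" "finite S" "0 \<le> t" "\<And>i. i \<in> S \<Longrightarrow> 0 \<le> w i" "t + sum w S = 1"
    and "prob_on A r" "\<And>i. i \<in> S \<Longrightarrow> prob_on A (q i)"
  shows "t * F_on A r + (\<Sum>i\<in>S. w i * F_on A (q i))
    \<le> F_on A (\<lambda>x. t * r x + (\<Sum>i\<in>S. w i * q i x))"
  using assms(2-)
proof (induction S arbitrary: t r rule: finite_induct)
  case empty
  then show ?case by simp
next
  case (insert j S)
  define t' where "t' = t + w j"
  have "0 \<le> w j" "prob_on A (q j)" using insert.prems by auto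
  show ?case
  proof (cases "t' = 0")
    case True
    then have "t = 0" "w j = 0" using \<open>0 \<le> t\<close> \<open>0 \<le> w j\<close> unfolding t'_def by auto
    then show ?thesis
      using insert.IH[of 0 r] insert.prems insert.hyps by simp
  next
    case False
    then have "0 < t'" using \<open>0 \<le> t\<close> \<open>0 \<le> w j\<close> unfolding t'_def by simp
    define r' where "r' x = t / t' * r x + (1 - t / t') * q j x" for x
    have t_div: "0 \<le> t / t'" "t / t' \<le> 1" "t' * (1 - t / t') = w j"
      using \<open>0 < t'\<close> \<open>0 \<le> t\<close> \<open>0 \<le> w j\<close> by (auto simp: t'_def field_simps)
    have "prob_on A r'"
      unfolding r'_def using prob_on_mix insert.prems t_div by blast
    then have IH: "t' * F_on A r' + (\<Sum>i\<in>S. w i * F_on A (q i))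
        \<le> F_on A (\<lambda>x. t' * r' x + (\<Sum>i\<in>S. w i * q i x))"
      using insert.IH[of t' r'] insert.prems insert.hyps \<open>0 < t'\<close> by (simp add: t'_def)
    have "t / t' * F_on A r + (1 - t / t') * F_on A (q j) \<le> F_on A r'"
      unfolding r'_def using F_on_concave assms(1) insert.prems t_div by blast
    from mult_left_mono[OF this, of t'] have
      "t * F_on A r + w j * F_on A (q j) \<le> t' * F_on A r'"
      using \<open>0 < t'\<close> t_div(3) by (simp add: distrib_left mult.assoc[symmetric])
    moreover have "t' * r' x = t * r x + w j * q j x" for x
      using \<open>0 < t'\<close> t_div(3) by (simp add: r'_def distrib_left mult.assoc[symmetric])
    ultimately show ?thesis
      using IH insert.hyps by (simp add: add.assoc)
  qed
qed

lemma F_on_partial_mixture: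
  assumes A: "finite A" and p: "prob_on A p"
    and w: "\<And>i. i \<in> I \<Longrightarrow> 0 \<le> w i" "(w has_sum 1) I"
    and q: "\<And>i. i \<in> I \<Longrightarrow> prob_on A (q i)"
    and mixture: "\<And>x. x \<in> A \<Longrightarrow> ((\<lambda>i. w i * q i x) has_sum p x) I"
    and S: "finite S" "S \<subseteq> I"
  shows "(\<Sum>i\<in>S. w i * F_on A (q i)) - (1 - sum w S) * B \<le> F_on A p"
proof -
  obtain r where r: "prob_on A r" "sum w S \<le> 1"
    and p_eq: "\<And>x. x \<in> A \<Longrightarrow> p x = (1 - sum w S) * r x + (\<Sum>i\<in>S. w i * q i x)"
    using mixture_truncation[OF A p w q mixture S] by blast
  have "(1 - sum w S) * F_on A r + (\<Sum>i\<in>S. w i * F_on A (q i))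
      \<le> F_on A (\<lambda>x. (1 - sum w S) * r x + (\<Sum>i\<in>S. w i * q i x))"
    using r w(1) S(2) q by (intro F_on_jensen[OF A S(1)]) auto
  also have "\<dots> = F_on A p"
    using A p_eq by (intro F_on_cong) simp_all
  finally have "(\<Sum>i\<in>S. w i * F_on A (q i)) \<le> F_on A p - (1 - sum w S) * F_on A r"
    by simp
  moreover have "- ((1 - sum w S) * B) \<le> (1 - sum w S) * F_on A r"
    using F_on_bounded[OF A r(1)] mult_left_mono[of "- B" "F_on A r" "1 - sum w S"] r(2)
    by simp
  ultimately show ?thesis
    by linarith
qed

lemma F_on_jensen_infsum:
  assumes A: "finite A" and p: "prob_on A p"
    and w: "\<And>i. i \<in> I \<Longrightarrow> 0 \<le> w i" "(w has_sum 1) I"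
    and q: "\<And>i. i \<in> I \<Longrightarrow> prob_on A (q i)"
    and mixture: "\<And>x. x \<in> A \<Longrightarrow> ((\<lambda>i. w i * q i x) has_sum p x) I"
  shows "(\<Sum>\<^sub>\<infinity>i\<in>I. w i * F_on A (q i)) \<le> F_on A p"
proof -
  have summable: "(\<lambda>i. w i * F_on A (q i)) summable_on I"
  proof (rule summable_on_bounded_mult)
    show "w summable_on I"
      using w(2) summable_on_def by blast
    show "\<bar>F_on A (q i)\<bar> \<le> B" if "i \<in> I" for i
      using F_on_bounded[OF A q[OF that]] .
  qed (rule w(1))
  have "(sum (\<lambda>i. w i * F_on A (q i)) \<longlongrightarrow> (\<Sum>\<^sub>\<infinity>i\<in>I. w i * F_on A (q i)))
      (finite_subsets_at_top I)" and "(sum w \<longlongrightarrow> 1) (finite_subsets_at_top I)"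
    using has_sum_infsum[OF summable] w(2) unfolding has_sum_def by blast+
  then have "((\<lambda>S. (\<Sum>i\<in>S. w i * F_on A (q i)) - (1 - sum w S) * B)
      \<longlongrightarrow> (\<Sum>\<^sub>\<infinity>i\<in>I. w i * F_on A (q i)) - (1 - 1) * B) (finite_subsets_at_top I)"
    by (intro tendsto_diff tendsto_mult_right tendsto_const)
  moreover have "\<forall>\<^sub>F S in finite_subsets_at_top I.
      (\<Sum>i\<in>S. w i * F_on A (q i)) - (1 - sum w S) * B \<le> F_on A p"
    by (intro eventually_finite_subsets_at_top_weakI F_on_partial_mixture[OF A p w q mixture])
  ultimately show ?thesis
    using tendsto_upperbound[OF _ _ finite_subsets_at_top_neq_bot] by fastforce
qed

end

definition posterior :: "'w pmf \<Rightarrow> ('w \<Rightarrow> 'x) \<Rightarrow> ('w \<Rightarrow> 'y) \<Rightarrow> 'y \<Rightarrow> 'x \<Rightarrow> real" where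
  "posterior \<mu> X Y y x = Pr \<mu> (X -` {x} \<inter> Y -` {y}) / Pr \<mu> (Y -` {y})"

lemma post_vec_posterior: "post_vec \<mu> X Y y = map (posterior \<mu> X Y y) (enum_of (range X))"
  unfolding post_vec_def posterior_def ..

lemma posterior_nonneg: "0 \<le> posterior \<mu> X Y y x"
  unfolding posterior_def by (simp add: Pr_nonneg)

lemma prob_on_distribution:
  assumes "finite (range X)"
  shows "prob_on (range X) (\<lambda>x. Pr \<mu> (X -` {x}))"
  using sum_Pr_preimages[OF assms, of \<mu> UNIV] by (simp add: prob_on_def Pr_nonneg)

lemma prob_on_posterior:
  assumes "finite (range X)" "0 < Pr \<mu> (Y -` {y})"
  shows "prob_on (range X) (posterior \<mu> X Y y)"
proof -
  have "(\<Sum>x\<in>range X. Pr \<mu> (X -` {x} \<inter> Y -` {y})) = Pr \<mu> (Y -` {y})"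
    using sum_Pr_preimages[OF assms(1), of \<mu> "Y -` {y}"] by (simp add: Int_commute)
  then show ?thesis
    using assms(2) by (simp add: prob_on_def posterior_def Pr_nonneg sum_divide_distrib[symmetric])
qed

lemma has_sum_posterior:
  assumes "0 < Pr \<mu> (Y -` {y})"
  shows "(posterior \<mu> X Y y has_sum 1) {x. 0 < Pr \<mu> (X -` {x})}"
proof -
  have "X -` {x} \<inter> Y -` {y} = Y -` {y} \<inter> X -` {x}" for x
    by blast
  then show ?thesis
    using has_sum_divide_const[OF has_sum_Pr_preimages_pos[of \<mu> "Y -` {y}" X],
        of "Pr \<mu> (Y -` {y})"] assms
    by (simp add: posterior_def[abs_def])
qed

lemma has_sum_total_probability:
  "((\<lambda>y. Pr \<mu> (Y -` {y}) * posterior \<mu> X Y y x) has_sum Pr \<mu> (X -` {x}))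
     {y. 0 < Pr \<mu> (Y -` {y})}"
  using has_sum_Pr_preimages_pos[of \<mu> "X -` {x}" Y]
  by (subst has_sum_cong[where g = "\<lambda>y. Pr \<mu> (X -` {x} \<inter> Y -` {y})"]) (auto simp: posterior_def)

lemma has_sum_posterior_cond_indep:
  assumes "cond_indep \<mu> X Y Z" "0 < Pr \<mu> (Z -` {z})"
  shows "((\<lambda>y. posterior \<mu> Y Z z y * posterior \<mu> X Y y x) has_sum posterior \<mu> X Z z x)
     {y. 0 < Pr \<mu> (Y -` {y})}"
proof -
  have "posterior \<mu> Y Z z y * posterior \<mu> X Y y x
      = Pr \<mu> ((X -` {x} \<inter> Z -` {z}) \<inter> Y -` {y}) / Pr \<mu> (Z -` {z})"
    if "0 < Pr \<mu> (Y -` {y})" for y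
  proof -
    have "Pr \<mu> (X -` {x} \<inter> Y -` {y} \<inter> Z -` {z}) * Pr \<mu> (Y -` {y}) =
        Pr \<mu> (X -` {x} \<inter> Y -` {y}) * Pr \<mu> (Y -` {y} \<inter> Z -` {z})"
      using assms(1) unfolding cond_indep_def by blast
    moreover have "(X -` {x} \<inter> Z -` {z}) \<inter> Y -` {y} = X -` {x} \<inter> Y -` {y} \<inter> Z -` {z}"
      by blast
    ultimately show ?thesis
      using that assms(2) by (simp add: posterior_def field_simps)
  qed
  then show ?thesis
    using has_sum_divide_const[OF has_sum_Pr_preimages_pos[of \<mu> "X -` {x} \<inter> Z -` {z}" Y],
        of "Pr \<mu> (Z -` {z})"]
    by (subst has_sum_cong) (auto simp: posterior_def)
qed

lemma has_sum_tower:
  fixes \<mu> :: "'w pmf" and Y :: "'w \<Rightarrow> 'y" and Z :: "'w \<Rightarrow> 'z" and f :: "'y \<Rightarrow> real"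
  defines "Iy \<equiv> {y. 0 < Pr \<mu> (Y -` {y})}" and "Iz \<equiv> {z. 0 < Pr \<mu> (Z -` {z})}"
  assumes "\<And>y. y \<in> Iy \<Longrightarrow> \<bar>f y\<bar> \<le> B"
  shows "((\<lambda>z. Pr \<mu> (Z -` {z}) * (\<Sum>\<^sub>\<infinity>y\<in>Iy. posterior \<mu> Y Z z y * f y))
     has_sum (\<Sum>\<^sub>\<infinity>y\<in>Iy. Pr \<mu> (Y -` {y}) * f y)) Iz"
proof -
  define h where "h = (\<lambda>(y, z). Pr \<mu> (Y -` {y} \<inter> Z -` {z}) * f y)"
  have "h summable_on Iy \<times> Iz"
    unfolding h_def case_prod_beta
    by (rule summable_on_bounded_mult[OF summable_on_joint_Pr[unfolded case_prod_beta], where B = B])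
      (auto simp: Pr_nonneg assms(3))
  then have h: "(h has_sum (\<Sum>\<^sub>\<infinity>p\<in>Iy \<times> Iz. h p)) (Iy \<times> Iz)"
    by (rule has_sum_infsum)
  have "((\<lambda>z. h (y, z)) has_sum Pr \<mu> (Y -` {y}) * f y) Iz" for y
    unfolding h_def Iz_def case_prod_conv
    by (rule has_sum_cmult_left[OF has_sum_Pr_preimages_pos[of \<mu> "Y -` {y}" Z, simplified]])
  with h have "((\<lambda>y. Pr \<mu> (Y -` {y}) * f y) has_sum (\<Sum>\<^sub>\<infinity>p\<in>Iy \<times> Iz. h p)) Iy"
    by (rule has_sum_SigmaD)
  then have total: "(\<Sum>\<^sub>\<infinity>p\<in>Iy \<times> Iz. h p) = (\<Sum>\<^sub>\<infinity>y\<in>Iy. Pr \<mu> (Y -` {y}) * f y)"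
    by (rule infsumI[symmetric])
  have inner: "((\<lambda>y. h (y, z)) has_sum Pr \<mu> (Z -` {z}) * (\<Sum>\<^sub>\<infinity>y\<in>Iy. posterior \<mu> Y Z z y * f y)) Iy"
    if "z \<in> Iz" for z
  proof -
    have "(\<lambda>y. posterior \<mu> Y Z z y * f y) summable_on Iy"
    proof (rule summable_on_bounded_mult[where B = B])
      show "posterior \<mu> Y Z z summable_on Iy"
        using has_sum_posterior[of \<mu> Z z Y] that unfolding summable_on_def Iy_def Iz_def by auto
    qed (auto simp: posterior_nonneg assms(3))
    then have "((\<lambda>y. Pr \<mu> (Z -` {z}) * (posterior \<mu> Y Z z y * f y))
        has_sum Pr \<mu> (Z -` {z}) * (\<Sum>\<^sub>\<infinity>y\<in>Iy. posterior \<mu> Y Z z y * f y)) Iy"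
      by (intro has_sum_cmult_right has_sum_infsum)
    moreover have "Pr \<mu> (Z -` {z}) * (posterior \<mu> Y Z z y * f y) = h (y, z)" for y
      using that by (simp add: h_def Iz_def posterior_def Int_commute)
    ultimately show ?thesis
      by simp
  qed
  have "((\<lambda>(z, y). h (y, z)) has_sum (\<Sum>\<^sub>\<infinity>p\<in>Iy \<times> Iz. h p)) (Iz \<times> Iy)"
    using h by (subst (asm) has_sum_swap)
  then show ?thesis
    unfolding total[symmetric] by (rule has_sum_SigmaD) (simp add: inner)
qed

definition posterior_average ::
    "'w pmf \<Rightarrow> ('w \<Rightarrow> 'x) \<Rightarrow> ('w \<Rightarrow> 'y) \<Rightarrow> (real list \<Rightarrow> real) \<Rightarrow> real" where
  "posterior_average \<mu> X Y F =
     (\<Sum>\<^sub>\<infinity>y\<in>{y. 0 < Pr \<mu> (Y -` {y})}. Pr \<mu> (Y -` {y}) * F (post_vec \<mu> X Y y))"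

lemma gHc_posterior_average: "gHc \<eta> F \<mu> X Y = \<eta> (posterior_average \<mu> X Y F)"
  unfolding gHc_def posterior_average_def ..

lemma posterior_average_cmult:
  "posterior_average \<mu> X Y (\<lambda>p. c * F p) = c * posterior_average \<mu> X Y F"
  unfolding posterior_average_def by (simp add: mult.left_commute infsum_cmult_right')

context bounded_concave
begin

lemma F_post_vec: "F (post_vec \<mu> X Y y) = F_on (range X) (posterior \<mu> X Y y)"
  unfolding F_on_def post_vec_posterior ..

lemma summable_on_posterior_average:
  assumes "finite (range X)"
  shows "(\<lambda>y. Pr \<mu> (Y -` {y}) * F (post_vec \<mu> X Y y)) summable_on {y. 0 < Pr \<mu> (Y -` {y})}"
  unfolding F_post_vec using F_on_bounded[OF assms prob_on_posterior[OF assms]]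
    has_sum_Pr_preimages_pos[of \<mu> UNIV Y]
  by (intro summable_on_bounded_mult) (auto simp: Pr_nonneg summable_on_def)

lemma posterior_average_le:
  assumes "finite (range X)"
  shows "posterior_average \<mu> X Y F \<le> F (distr_vec \<mu> X)"
proof -
  have "F (distr_vec \<mu> X) = F_on (range X) (\<lambda>x. Pr \<mu> (X -` {x}))"
    unfolding F_on_def distr_vec_def ..
  moreover have "(\<Sum>\<^sub>\<infinity>y\<in>{y. 0 < Pr \<mu> (Y -` {y})}. Pr \<mu> (Y -` {y}) * F_on (range X) (posterior \<mu> X Y y))
      \<le> F_on (range X) (\<lambda>x. Pr \<mu> (X -` {x}))"
    using has_sum_Pr_preimages_pos[of \<mu> UNIV Y]
    by (intro F_on_jensen_infsum assms prob_on_distribution prob_on_posterior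
        has_sum_total_probability) (auto simp: Pr_nonneg)
  ultimately show ?thesis
    unfolding posterior_average_def F_post_vec by simp
qed

lemma posterior_average_cond_indep:
  assumes "finite (range X)" "cond_indep \<mu> X Y Z"
  shows "posterior_average \<mu> X Y F \<le> posterior_average \<mu> X Z F"
proof -
  define Iy where "Iy = {y. 0 < Pr \<mu> (Y -` {y})}"
  define Iz where "Iz = {z. 0 < Pr \<mu> (Z -` {z})}"
  define f where "f y = F_on (range X) (posterior \<mu> X Y y)" for y
  have f_bounded: "\<bar>f y\<bar> \<le> B" if "y \<in> Iy" for y
    using F_on_bounded[OF assms(1) prob_on_posterior[OF assms(1)]] that
    unfolding f_def Iy_def by auto
  have tower: "((\<lambda>z. Pr \<mu> (Z -` {z}) * (\<Sum>\<^sub>\<infinity>y\<in>Iy. posterior \<mu> Y Z z y * f y))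
      has_sum (\<Sum>\<^sub>\<infinity>y\<in>Iy. Pr \<mu> (Y -` {y}) * f y)) Iz"
    using has_sum_tower[of \<mu> Y f B Z] f_bounded unfolding Iy_def Iz_def by blast
  have "posterior_average \<mu> X Y F = (\<Sum>\<^sub>\<infinity>y\<in>Iy. Pr \<mu> (Y -` {y}) * f y)"
    unfolding posterior_average_def F_post_vec Iy_def f_def ..
  also have "\<dots> = (\<Sum>\<^sub>\<infinity>z\<in>Iz. Pr \<mu> (Z -` {z}) * (\<Sum>\<^sub>\<infinity>y\<in>Iy. posterior \<mu> Y Z z y * f y))"
    using tower by (rule infsumI[symmetric])
  also have "\<dots> \<le> (\<Sum>\<^sub>\<infinity>z\<in>Iz. Pr \<mu> (Z -` {z}) * F (post_vec \<mu> X Z z))"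
  proof (rule infsum_mono)
    show "(\<lambda>z. Pr \<mu> (Z -` {z}) * (\<Sum>\<^sub>\<infinity>y\<in>Iy. posterior \<mu> Y Z z y * f y)) summable_on Iz"
      using tower summable_on_def by blast
    show "(\<lambda>z. Pr \<mu> (Z -` {z}) * F (post_vec \<mu> X Z z)) summable_on Iz"
      unfolding Iz_def by (rule summable_on_posterior_average[OF assms(1)])
    fix z assume "z \<in> Iz"
    have "(\<Sum>\<^sub>\<infinity>y\<in>Iy. posterior \<mu> Y Z z y * f y) \<le> F_on (range X) (posterior \<mu> X Z z)"
      using \<open>z \<in> Iz\<close> assms unfolding f_def Iy_def Iz_def
      by (intro F_on_jensen_infsum prob_on_posterior posterior_nonneg has_sum_posterior
          has_sum_posterior_cond_indep) auto
    then show "Pr \<mu> (Z -` {z}) * (\<Sum>\<^sub>\<infinity>y\<in>Iy. posterior \<mu> Y Z z y * f y)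
        \<le> Pr \<mu> (Z -` {z}) * F (post_vec \<mu> X Z z)"
      unfolding F_post_vec by (intro mult_left_mono) (simp_all add: Pr_nonneg)
  qed
  finally show ?thesis
    unfolding posterior_average_def Iz_def .
qed

end

lemma concave_F_uminus:
  assumes "convex_F F"
  shows "concave_F (\<lambda>p. - F p)"
  unfolding concave_F_def
proof (intro allI impI)
  fix p q and t :: real
  assume "prob_vec p" "prob_vec q" "length p = length q" "0 \<le> t" "t \<le> 1"
  then have "F (mix_vec t p q) \<le> t * F p + (1 - t) * F q"
    using assms unfolding convex_F_def by blast
  then show "t * - F p + (1 - t) * - F q \<le> - F (mix_vec t p q)"
    by linarith
qed

lemma gen_entropy_concave_form:
  assumes "gen_entropy \<eta> F"
  obtains \<sigma> B :: real
  where "\<sigma> * \<sigma> = 1" "mono (\<lambda>t. \<eta> (\<sigma> * t))" "bounded_concave (\<lambda>p. \<sigma> * F p) B"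
proof -
  obtain B where bounded: "\<And>p. prob_vec p \<Longrightarrow> \<bar>F p\<bar> \<le> B"
    using assms unfolding gen_entropy_def by blast
  consider "mono \<eta>" "concave_F F" | "antimono \<eta>" "convex_F F"
    using assms unfolding gen_entropy_def by blast
  then show ?thesis
  proof cases
    case 1
    show ?thesis
    proof (rule that[of 1 B])
      show "bounded_concave (\<lambda>p. 1 * F p) B"
        using 1 bounded by unfold_locales simp_all
    qed (use 1 in simp_all)
  next
    case 2
    show ?thesis
    proof (rule that[of "-1" B])
      show "mono (\<lambda>t. \<eta> (-1 * t))"
        using \<open>antimono \<eta>\<close> by (intro monoI) (simp add: antimonoD)
      show "bounded_concave (\<lambda>p. -1 * F p) B"
        using concave_F_uminus[OF \<open>convex_F F\<close>] bounded by unfold_locales simp_all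
    qed simp
  qed
qed

theorem proposition2:
  fixes \<eta> :: "real \<Rightarrow> real" and F :: "real list \<Rightarrow> real"
  assumes "gen_entropy \<eta> F"
  shows "(\<forall>(\<mu> :: 'w pmf) (X :: 'w \<Rightarrow> 'x) (Y :: 'w \<Rightarrow> 'y).
            finite (range X) \<longrightarrow> gH \<eta> F \<mu> X - gHc \<eta> F \<mu> X Y \<ge> 0)
       \<and> (\<forall>(\<nu> :: 'v pmf) (X :: 'v \<Rightarrow> 'a) (Y :: 'v \<Rightarrow> 'b) (Z :: 'v \<Rightarrow> 'c).
            finite (range X) \<longrightarrow> cond_indep \<nu> X Y Z \<longrightarrow> gHc \<eta> F \<nu> X Z \<ge> gHc \<eta> F \<nu> X Y)"
proof -
  obtain \<sigma> B :: real where \<sigma>: "\<sigma> * \<sigma> = 1" and mono: "mono (\<lambda>t. \<eta> (\<sigma> * t))"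
    and G: "bounded_concave (\<lambda>p. \<sigma> * F p) B"
    using gen_entropy_concave_form[OF assms] .
  have \<eta>: "\<eta> t = \<eta> (\<sigma> * (\<sigma> * t))" for t
    using \<sigma> by (simp add: mult.assoc[symmetric])
  have gH: "gH \<eta> F \<mu> X = \<eta> (\<sigma> * (\<sigma> * F (distr_vec \<mu> X)))" for \<mu> :: "'w pmf" and X :: "'w \<Rightarrow> 'x"
    unfolding gH_def by (rule \<eta>)
  have gHc: "gHc \<eta> F \<mu> X Y = \<eta> (\<sigma> * posterior_average \<mu> X Y (\<lambda>p. \<sigma> * F p))"
    for \<mu> :: "'u pmf" and X :: "'u \<Rightarrow> 's" and Y :: "'u \<Rightarrow> 't"
    unfolding gHc_posterior_average posterior_average_cmult by (rule \<eta>)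
  show ?thesis
  proof (intro conjI allI impI)
    fix \<mu> :: "'w pmf" and X :: "'w \<Rightarrow> 'x" and Y :: "'w \<Rightarrow> 'y"
    assume "finite (range X)"
    then show "gH \<eta> F \<mu> X - gHc \<eta> F \<mu> X Y \<ge> 0"
      unfolding gH gHc
      using monoD[OF mono bounded_concave.posterior_average_le[OF G \<open>finite (range X)\<close>]] by simp
  next
    fix \<nu> :: "'v pmf" and X :: "'v \<Rightarrow> 'a" and Y :: "'v \<Rightarrow> 'b" and Z :: "'v \<Rightarrow> 'c"
    assume "finite (range X)" "cond_indep \<nu> X Y Z"
    then show "gHc \<eta> F \<nu> X Z \<ge> gHc \<eta> F \<nu> X Y"
      unfolding gHc using monoD[OF mono bounded_concave.posterior_average_cond_indep[OF G]] by simp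
  qed
qed

end
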